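(* Let Assumptions (A1), (A3) and (A4) below hold and let $C>C(M'):=M'(\ell_{\max}-\ell^\star)+2\bar\lambda+\ell^\star p^\star$. Then there exist $\delta\in\mathcal L$ and $N_0\in\mathbb{N}$ such that for each prediction horizon $N\ge N_0$ the MPC feedback $\mu_N^\beta$ satisfies, for all $x\in\mathbb{X}_{\mathrm{pi}}(C,N_0)$, $$J^{\mathrm{av}}_\infty(x,\mu_N^\beta)\le\ell^\star+\delta(N).$$
   Context: System $x(k+1)=f(x(k),u(k))$ with $f:\mathbb{X}\times\mathbb{U}\to\mathbb{R}^n$, constraint sets $\mathbb{X}\subset\mathbb{R}^n$, $\mathbb{U}\subset\mathbb{R}^m$, stage cost $\ell:\mathbb{X}\times\mathbb{U}\to\mathbb{R}$. For $u\in\mathbb{U}^T$, $x_u(0,x)=x$, $x_u(k+1,x)=f(x_u(k,x),u(k))$; for a feedback $\mu$, $x_\mu(k,x)$ is the closed-loop trajectory with $u(k)=\mu(x_\mu(k,x))$; $\mathbb{U}^T(x)$ is the set of $u\in\mathbb{U}^T$ with $x_u(k,x)\in\mathbb{X}$ for $k=0,\dots,T$. $J_T(x,\mu)=\sum_{k=0}^{T-1}\ell(x_\mu(k,x),\mu(x_\mu(k,x)))$ and $J^{\mathrm{av}}_\infty(x,\mu)=\limsup_{T\to\infty}\frac1TJ_T(x,\mu)$. $[k]_p$ is $k$ mod $p$. A feasible $p$-periodic orbit is $\Pi\in(\mathbb{X}\times\mathbb{U})^p$ with $\Pi_\mathbb{X}([k+1]_p)=f(\Pi(k))$; $\|(x,u)\|_\Pi:=\min_k\|(x,u)-\Pi(k)\|$,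 $\|x\|_{\Pi_\mathbb{X}}:=\min_k\|x-\Pi_\mathbb{X}(k)\|$; $\ell^\star:=\inf$ over all feasible periodic orbits of $\frac1p\sum_{k=0}^{p-1}\ell(\Pi(k))$; $\Pi^\star$ is a fixed feasible $p^\star$-periodic orbit attaining $\ell^\star$. $\ell_{\max}:=\sup_{\mathbb{X}\times\mathbb{U}}\ell$. $\mathcal L$: continuous decreasing functions $[0,\infty)\to[0,\infty)$ tending to $0$. (A1) $f,\ell$ continuous, $\mathbb{X},\mathbb{U}$ compact. (A3) There are $\lambda:\mathbb{X}\to\mathbb{R}$, $\bar\lambda$ with $|\lambda|\le\bar\lambda$ on $\mathbb{X}$, and $\underline\alpha_{\tilde\ell}\in\mathcal K_\infty$ with $\ell(x,u)-\ell^\star+\lambda(x)-\lambda(f(x,u))\ge\underline\alpha_{\tilde\ell}(\|(x,u)\|_{\Pi^\star})$ for all $x\in\mathbb{X}$, $u\in\mathbb{U}^1(x)$. (A4) There are $\kappa>0$, $M'\in\mathbb{N}$, $\rho\in\mathcal K_\infty$ such that for all $z\in\{\Pi^\star_\mathbb{X}(k)\}$ and $x,y\in\mathbb{X}$ with $\|x-z\|,\|y-z\|\le\kappa$ there is $u\in\mathbb{U}^{M'}(x)$ with $x_u(M',x)=y$ and $\|(x_u(k,x),u(k))\|_{\Pi^\star}\le\rho(\max\{\|x\|_{\Pi^\star_\mathbb{X}},\|y\|_{\Pi^\star_\mathbb{X}}\})$ for $k=0,\dots,M'-1$. Discounted MPC: $\beta_N(k)=\frac{N-k}{N}$, $J_N^\beta(x,u)=\sum_{k=0}^{N-1}\beta_N(k)\ell(x_u(k,x),u(k))$,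 $V_N^\beta(x)=\inf_{u\in\mathbb{U}^N(x)}J_N^\beta(x,u)$, $u^\beta_{N,x}$ a minimizer, $\mu_N^\beta(x)=u^\beta_{N,x}(0)$. For $C\in\mathbb{R}$, $N_0\in\mathbb{N}$, $\mathbb{X}_{\mathrm{pi}}(C,N_0)$ is the set of $x\in\mathbb{X}$ with $V_N^\beta(x)-\frac{N+1}{2}\ell^\star+\lambda(x)+\bar\lambda\le C$ for all $N\ge N_0$. *)

theory Defs
  imports "HOL-Analysis.Analysis"
begin

fun traj :: "('a \<Rightarrow> 'b \<Rightarrow> 'a) \<Rightarrow> 'a \<Rightarrow> (nat \<Rightarrow> 'b) \<Rightarrow> nat \<Rightarrow> 'a" where
  "traj f x u 0 = x"
| "traj f x u (Suc k) = f (traj f x u k) (u k)"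

fun cltraj :: "('a \<Rightarrow> 'b \<Rightarrow> 'a) \<Rightarrow> ('a \<Rightarrow> 'b) \<Rightarrow> 'a \<Rightarrow> nat \<Rightarrow> 'a" where
  "cltraj f \<mu> x 0 = x"
| "cltraj f \<mu> x (Suc k) = f (cltraj f \<mu> x k) (\<mu> (cltraj f \<mu> x k))"

text \<open>Admissible control sequences U^T(x) (only the first T entries matter).\<close>
definition adm :: "('a \<Rightarrow> 'b \<Rightarrow> 'a) \<Rightarrow> 'a set \<Rightarrow> 'b set \<Rightarrow> nat \<Rightarrow> 'a \<Rightarrow> (nat \<Rightarrow> 'b) set" where
  "adm f X U T x = {u. (\<forall>k<T. u k \<in> U) \<and> (\<forall>k\<le>T. traj f x u k \<in> X)}"

definition JT :: "('a \<Rightarrow> 'b \<Rightarrow> 'a) \<Rightarrow> ('a \<Rightarrow> 'b \<Rightarrow> real) \<Rightarrow> nat \<Rightarrow> 'a \<Rightarrow> ('a \<Rightarrow> 'b) \<Rightarrow> real" where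
  "JT f l T x \<mu> = (\<Sum>k<T. l (cltraj f \<mu> x k) (\<mu> (cltraj f \<mu> x k)))"

definition Jav :: "('a \<Rightarrow> 'b \<Rightarrow> 'a) \<Rightarrow> ('a \<Rightarrow> 'b \<Rightarrow> real) \<Rightarrow> 'a \<Rightarrow> ('a \<Rightarrow> 'b) \<Rightarrow> ereal" where
  "Jav f l x \<mu> = limsup (\<lambda>T. ereal (JT f l T x \<mu> / real T))"

definition feasible_orbit :: "('a \<Rightarrow> 'b \<Rightarrow> 'a) \<Rightarrow> 'a set \<Rightarrow> 'b set \<Rightarrow> (nat \<Rightarrow> 'a \<times> 'b) \<Rightarrow> nat \<Rightarrow> bool" where
  "feasible_orbit f X U P p \<longleftrightarrow> p \<ge> 1 \<and> (\<forall>k<p. P k \<in> X \<times> U \<and>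
      fst (P ((k + 1) mod p)) = f (fst (P k)) (snd (P k)))"

definition orbit_avg :: "('a \<Rightarrow> 'b \<Rightarrow> real) \<Rightarrow> (nat \<Rightarrow> 'a \<times> 'b) \<Rightarrow> nat \<Rightarrow> real" where
  "orbit_avg l P p = (\<Sum>k<p. l (fst (P k)) (snd (P k))) / real p"

definition ell_star :: "('a \<Rightarrow> 'b \<Rightarrow> 'a) \<Rightarrow> 'a set \<Rightarrow> 'b set \<Rightarrow> ('a \<Rightarrow> 'b \<Rightarrow> real) \<Rightarrow> real" where
  "ell_star f X U l = Inf {orbit_avg l P p | P p. feasible_orbit f X U P p}"

definition ell_max :: "'a set \<Rightarrow> 'b set \<Rightarrow> ('a \<Rightarrow> 'b \<Rightarrow> real) \<Rightarrow> real" where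
  "ell_max X U l = Sup ((\<lambda>(x, u). l x u) ` (X \<times> U))"

definition orbit_dist :: "(nat \<Rightarrow> 'a \<times> 'b) \<Rightarrow> nat \<Rightarrow> ('a::real_normed_vector \<times> 'b::real_normed_vector) \<Rightarrow> real" where
  "orbit_dist P p z = Min ((\<lambda>k. norm (z - P k)) ` {..<p})"

definition orbitX_dist :: "(nat \<Rightarrow> 'a \<times> 'b) \<Rightarrow> nat \<Rightarrow> 'a::real_normed_vector \<Rightarrow> real" where
  "orbitX_dist P p x = Min ((\<lambda>k. norm (x - fst (P k))) ` {..<p})"

definition class_Kinf :: "(real \<Rightarrow> real) \<Rightarrow> bool" where
  "class_Kinf \<alpha> \<longleftrightarrow> continuous_on {0..} \<alpha> \<and> \<alpha> 0 = 0 \<and>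
     (\<forall>s t. 0 \<le> s \<and> s < t \<longrightarrow> \<alpha> s < \<alpha> t) \<and> filterlim \<alpha> at_top at_top"

definition class_L :: "(real \<Rightarrow> real) \<Rightarrow> bool" where
  "class_L \<delta> \<longleftrightarrow> continuous_on {0..} \<delta> \<and> (\<forall>t\<ge>0. \<delta> t \<ge> 0) \<and>
     (\<forall>s t. 0 \<le> s \<and> s \<le> t \<longrightarrow> \<delta> t \<le> \<delta> s) \<and> (\<delta> \<longlongrightarrow> 0) at_top"

definition Jbeta :: "('a \<Rightarrow> 'b \<Rightarrow> 'a) \<Rightarrow> ('a \<Rightarrow> 'b \<Rightarrow> real) \<Rightarrow> nat \<Rightarrow> 'a \<Rightarrow> (nat \<Rightarrow> 'b) \<Rightarrow> real" where
  "Jbeta f l N x u = (\<Sum>k<N. (real (N - k) / real N) * l (traj f x u k) (u k))"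

definition Vbeta :: "('a \<Rightarrow> 'b \<Rightarrow> 'a) \<Rightarrow> 'a set \<Rightarrow> 'b set \<Rightarrow> ('a \<Rightarrow> 'b \<Rightarrow> real) \<Rightarrow> nat \<Rightarrow> 'a \<Rightarrow> ereal" where
  "Vbeta f X U l N x = (INF u\<in>adm f X U N x. ereal (Jbeta f l N x u))"

definition mpc_feedback :: "('a \<Rightarrow> 'b \<Rightarrow> 'a) \<Rightarrow> 'a set \<Rightarrow> 'b set \<Rightarrow> ('a \<Rightarrow> 'b \<Rightarrow> real) \<Rightarrow> nat \<Rightarrow> ('a \<Rightarrow> 'b) \<Rightarrow> bool" where
  "mpc_feedback f X U l N \<mu> \<longleftrightarrow> (\<forall>x\<in>X. adm f X U N x \<noteq> {} \<longrightarrow>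
     (\<exists>u\<in>adm f X U N x. ereal (Jbeta f l N x u) = Vbeta f X U l N x \<and> \<mu> x = u 0))"

definition Xpi :: "('a \<Rightarrow> 'b \<Rightarrow> 'a) \<Rightarrow> 'a set \<Rightarrow> 'b set \<Rightarrow> ('a \<Rightarrow> 'b \<Rightarrow> real) \<Rightarrow> ('a \<Rightarrow> real) \<Rightarrow> real \<Rightarrow> real \<Rightarrow> nat \<Rightarrow> 'a set" where
  "Xpi f X U l lam lbar C N0 = {x\<in>X. \<forall>N\<ge>N0.
      Vbeta f X U l N x - ereal ((real N + 1) / 2 * ell_star f X U l) + ereal (lam x + lbar) \<le> ereal C}"

end

theory Submission
  imports Defs "HOL-Real_Asymp.Real_Asymp"
begin

text \<open>The rotated stage cost \<open>l x u - ls + lam x - lam (f x u)\<close> is nonnegative, at least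
  \<open>\<alpha> \<kappa>\<close> away from the optimal orbit and zero on it. Rotating the discounted cost shows that
  \<open>N\<close> times the excess of a control sequence (its discounted cost above
  \<open>ls (N + 1) / 2 - lam x - lbar\<close>) bounds its rotated costs weighted by \<open>N - k\<close>. Hence if
  the excess is at most \<open>Cb\<close>, the trajectory comes \<open>\<kappa>\<close>-close to the orbit at some time
  \<open>k\<close> with \<open>h < N - k \<le> 2 h\<close>, for \<open>h\<close> of order \<open>sqrt N\<close>. At the successor
  state, the candidate that follows the optimal controls up to \<open>k\<close>, steers to the orbit and
  then follows it costs at most the current optimal value minus the stage cost plus \<open>ls\<close>, up
  to an error \<open>Cb / h + (2 h + 1) K / N = O (1 / sqrt N)\<close>. So the optimal value is a storage
  function for the closed loop that stays in a band of bounded width, and averaging gives the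
  bound.\<close>

section \<open>Trajectories of concatenated controls\<close>

lemma traj_cong: "(\<And>i. i < j \<Longrightarrow> u i = v i) \<Longrightarrow> traj f x u j = traj f x v j"
  by (induction j) auto

lemma traj_shift: "traj f (traj f x u a) (\<lambda>d. u (a + d)) d = traj f x u (a + d)"
  by (induction d) auto

lemma admD:
  assumes "u \<in> adm f X U n x"
  shows "j \<le> n \<Longrightarrow> traj f x u j \<in> X" "j < n \<Longrightarrow> u j \<in> U"
  using assms by (auto simp: adm_def)

lemma adm_mono: "u \<in> adm f X U n x \<Longrightarrow> m \<le> n \<Longrightarrow> u \<in> adm f X U m x"
  by (auto simp: adm_def)

lemma adm_shift:
  "u \<in> adm f X U n x \<Longrightarrow> a \<le> n \<Longrightarrow> (\<lambda>d. u (a + d)) \<in> adm f X U (n - a) (traj f x u a)"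
  by (auto simp: adm_def traj_shift)

definition ctrl_append :: "nat \<Rightarrow> (nat \<Rightarrow> 'b) \<Rightarrow> (nat \<Rightarrow> 'b) \<Rightarrow> nat \<Rightarrow> 'b" where
  "ctrl_append a u w = (\<lambda>j. if j < a then u j else w (j - a))"

lemma traj_ctrl_append_le: "j \<le> a \<Longrightarrow> traj f x (ctrl_append a u w) j = traj f x u j"
  by (rule traj_cong) (simp add: ctrl_append_def)

lemma traj_ctrl_append_ge: "traj f x (ctrl_append a u w) (a + d) = traj f (traj f x u a) w d"
proof (induction d)
  case 0
  then show ?case by (simp add: traj_ctrl_append_le)
next
  case (Suc d)
  then show ?case by (simp add: ctrl_append_def)
qed

lemma adm_ctrl_append:
  assumes u: "u \<in> adm f X U a x" and w: "w \<in> adm f X U n (traj f x u a)"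
  shows "ctrl_append a u w \<in> adm f X U (a + n) x"
  unfolding adm_def
proof (intro CollectI conjI allI impI)
  fix j assume "j < a + n"
  then show "ctrl_append a u w j \<in> U"
    using u w by (auto simp: adm_def ctrl_append_def)
next
  fix j assume j: "j \<le> a + n"
  show "traj f x (ctrl_append a u w) j \<in> X"
  proof (cases "j \<le> a")
    case True
    then show ?thesis using u by (simp add: traj_ctrl_append_le adm_def)
  next
    case False
    then obtain d where "j = a + d" "d \<le> n" using j le_Suc_ex by fastforce
    then show ?thesis using w by (simp add: traj_ctrl_append_ge adm_def)
  qed
qed

section \<open>Linearly weighted costs\<close>

lemma sum_lessThan_rotate:
  assumes "0 < p"
  shows "(\<Sum>k<p. g (Suc k mod p)) = (\<Sum>k<p. g k :: 'c::comm_monoid_add)"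
proof -
  obtain q where p: "p = Suc q" using assms by (cases p) auto
  have "(\<Sum>k<Suc q. g (Suc k mod Suc q)) = (\<Sum>k<q. g (Suc k)) + g 0"
    by (simp add: sum.lessThan_Suc)
  then show ?thesis unfolding p sum.lessThan_Suc_shift by (simp add: add.commute)
qed

definition weighted_sum :: "nat \<Rightarrow> (nat \<Rightarrow> real) \<Rightarrow> real" where
  "weighted_sum n c = (\<Sum>j<n. real (n - j) * c j)"

lemma weighted_sum_Suc:
  "weighted_sum (Suc n) c = real (Suc n) * c 0 + weighted_sum n (\<lambda>j. c (Suc j))"
  unfolding weighted_sum_def sum.lessThan_Suc_shift by simp

lemma weighted_sum_split:
  assumes "a \<le> n"
  shows "weighted_sum n c = (\<Sum>j<a. real (n - j) * c j) + weighted_sum (n - a) (\<lambda>d. c (a + d))"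
proof -
  have "weighted_sum n c = (\<Sum>j<a. real (n - j) * c j) + (\<Sum>j\<in>{a..<n}. real (n - j) * c j)"
    unfolding weighted_sum_def using assms
    by (metis atLeast0LessThan sum.atLeastLessThan_concat zero_le)
  also have "(\<Sum>j\<in>{a..<n}. real (n - j) * c j) = weighted_sum (n - a) (\<lambda>d. c (a + d))"
    unfolding weighted_sum_def
    by (rule sum.reindex_bij_witness[of _ "\<lambda>d. a + d" "\<lambda>j. j - a"]) auto
  finally show ?thesis .
qed

lemma weighted_sum_add: "weighted_sum n (\<lambda>j. c j + d j) = weighted_sum n c + weighted_sum n d"
  by (simp add: weighted_sum_def distrib_left sum.distrib)

lemma weighted_sum_const: "weighted_sum n (\<lambda>_. b) = b * (real n * (real n + 1) / 2)"
proof (induction n)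
  case (Suc n)
  then show ?case by (simp add: weighted_sum_Suc field_simps)
qed (simp add: weighted_sum_def)

lemma weighted_sum_telescope:
  "weighted_sum n (\<lambda>j. g (Suc j) - g j) = (\<Sum>j<n. g (Suc j)) - real n * g 0"
proof (induction n arbitrary: g)
  case (Suc n)
  then show ?case
    using Suc[of "\<lambda>j. g (Suc j)"]
    by (simp add: weighted_sum_Suc sum.lessThan_Suc_shift del: sum.lessThan_Suc) (simp add: algebra_simps)
qed (simp add: weighted_sum_def)

lemma weighted_sum_nonneg: "(\<And>j. j < n \<Longrightarrow> 0 \<le> c j) \<Longrightarrow> 0 \<le> weighted_sum n c"
  unfolding weighted_sum_def by (intro sum_nonneg) auto

lemma weighted_sum_ge_prefix:
  assumes "a \<le> n" and nonneg: "\<And>j. j < n \<Longrightarrow> 0 \<le> c j"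
  shows "real (n - a) * (\<Sum>j<a. c j) \<le> weighted_sum n c"
proof -
  have "real (n - a) * (\<Sum>j<a. c j) \<le> (\<Sum>j<a. real (n - j) * c j)"
    unfolding sum_distrib_left using assms by (intro sum_mono mult_right_mono) auto
  also have "\<dots> \<le> weighted_sum n c"
    unfolding weighted_sum_def using assms by (intro sum_mono2) auto
  finally show ?thesis .
qed

lemma weighted_sum_ge_window:
  assumes "2 * h \<le> n" and nonneg: "\<And>j. j < n \<Longrightarrow> 0 \<le> c j" and "0 \<le> b"
    and window: "\<And>j. n - 2 * h \<le> j \<Longrightarrow> j < n - h \<Longrightarrow> b \<le> c j"
  shows "real h * real (Suc h) * b \<le> weighted_sum n c"
proof -
  have "real h * real (Suc h) * b = (\<Sum>j\<in>{n - 2 * h..<n - h}. real (Suc h) * b)"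
    using assms(1) by simp
  also have "\<dots> \<le> (\<Sum>j\<in>{n - 2 * h..<n - h}. real (n - j) * c j)"
    using assms by (intro sum_mono mult_mono) auto
  also have "\<dots> \<le> weighted_sum n c"
    unfolding weighted_sum_def using nonneg by (intro sum_mono2) auto
  finally show ?thesis .
qed

lemma weighted_sum_le_initial:
  assumes bound: "\<And>j. j < n \<Longrightarrow> c j \<le> (if j < M then B else 0)" and "0 \<le> B"
  shows "weighted_sum n c \<le> real n * real M * B"
proof -
  have "real (n - j) * c j \<le> (if j < M then real n * B else 0)" if "j < n" for j
  proof (cases "j < M")
    case True
    then have "real (n - j) * c j \<le> real (n - j) * B"
      using bound[OF that] by (intro mult_left_mono) auto
    also have "\<dots> \<le> real n * B" using assms(2) by (intro mult_right_mono) auto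
    finally show ?thesis using True by simp
  next
    case False
    then show ?thesis using bound[OF that] by (simp add: mult_nonneg_nonpos)
  qed
  then have "weighted_sum n c \<le> (\<Sum>j<n. if j < M then real n * B else 0)"
    unfolding weighted_sum_def by (intro sum_mono) auto
  also have "\<dots> = real (card ({..<n} \<inter> {j. j < M})) * (real n * B)"
    by (simp add: sum.If_cases)
  also have "\<dots> \<le> real M * (real n * B)"
    using assms(2) card_mono[of "{..<M}" "{..<n} \<inter> {j. j < M}"] by (intro mult_right_mono) auto
  finally show ?thesis by (simp add: algebra_simps)
qed

definition weighted_cost ::
    "('a \<Rightarrow> 'b \<Rightarrow> 'a) \<Rightarrow> ('a \<Rightarrow> 'b \<Rightarrow> real) \<Rightarrow> nat \<Rightarrow> 'a \<Rightarrow> (nat \<Rightarrow> 'b) \<Rightarrow> real" where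
  "weighted_cost f g n x u = weighted_sum n (\<lambda>j. g (traj f x u j) (u j))"

lemma Jbeta_eq_weighted_cost: "Jbeta f l N x u = weighted_cost f l N x u / real N"
  unfolding Jbeta_def weighted_cost_def weighted_sum_def by (simp add: sum_divide_distrib)

lemma weighted_cost_Suc:
  "weighted_cost f g (Suc n) x u
     = real (Suc n) * g x (u 0) + weighted_cost f g n (f x (u 0)) (\<lambda>j. u (Suc j))"
  using traj_shift[of f x u 1] unfolding weighted_cost_def weighted_sum_Suc by simp

lemma weighted_cost_split:
  assumes "a \<le> n"
  shows "weighted_cost f g n x u = (\<Sum>j<a. real (n - j) * g (traj f x u j) (u j))
           + weighted_cost f g (n - a) (traj f x u a) (\<lambda>d. u (a + d))"
  unfolding weighted_cost_def weighted_sum_split[OF assms] traj_shift ..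

lemma weighted_cost_ctrl_append:
  assumes "a \<le> n"
  shows "weighted_cost f g n x (ctrl_append a u w) = (\<Sum>j<a. real (n - j) * g (traj f x u j) (u j))
           + weighted_cost f g (n - a) (traj f x u a) w"
proof -
  have "(\<lambda>d. ctrl_append a u w (a + d)) = w" by (simp add: ctrl_append_def)
  moreover have "ctrl_append a u w j = u j" if "j < a" for j
    using that by (simp add: ctrl_append_def)
  then have "(\<Sum>j<a. real (n - j) * g (traj f x (ctrl_append a u w) j) (ctrl_append a u w j))
      = (\<Sum>j<a. real (n - j) * g (traj f x u j) (u j))"
    by (intro sum.cong) (simp_all add: traj_ctrl_append_le)
  ultimately show ?thesis
    using weighted_cost_split[OF assms, of f g x "ctrl_append a u w"] by (simp add: traj_ctrl_append_le)
qed

lemma weighted_cost_ctrl_append_Suc_diff: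
  assumes "a \<le> n"
  shows "weighted_cost f g (Suc n) x (ctrl_append a u w) - weighted_cost f g n x u
       = (\<Sum>j<a. g (traj f x u j) (u j)) + weighted_cost f g (Suc n - a) (traj f x u a) w
         - weighted_cost f g (n - a) (traj f x u a) (\<lambda>d. u (a + d))"
proof -
  define G where "G j = g (traj f x u j) (u j)" for j
  have "(\<Sum>j<a. real (Suc n - j) * G j) = (\<Sum>j<a. real (n - j) * G j + G j)"
    using assms by (intro sum.cong) (auto simp: Suc_diff_le algebra_simps)
  then show ?thesis
    using weighted_cost_ctrl_append[of a "Suc n" f g x u w] weighted_cost_split[OF assms, of f g x u] assms
    by (simp add: G_def sum.distrib)
qed

section \<open>Optimal feedbacks and average closed-loop cost\<close>

lemma mpc_feedback_optimal:
  assumes mpc: "mpc_feedback f X U l N \<mu>" and x: "x \<in> X" "adm f X U N x \<noteq> {}"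
  obtains u where "u \<in> adm f X U N x" "\<mu> x = u 0" "Vbeta f X U l N x = ereal (Jbeta f l N x u)"
    "\<And>v. v \<in> adm f X U N x \<Longrightarrow> Jbeta f l N x u \<le> Jbeta f l N x v"
proof -
  obtain u where u: "u \<in> adm f X U N x" "ereal (Jbeta f l N x u) = Vbeta f X U l N x" "\<mu> x = u 0"
    using mpc x unfolding mpc_feedback_def by blast
  have "Jbeta f l N x u \<le> Jbeta f l N x v" if "v \<in> adm f X U N x" for v
  proof -
    have "ereal (Jbeta f l N x u) \<le> ereal (Jbeta f l N x v)"
      using INF_lower[OF that, of "\<lambda>v. ereal (Jbeta f l N x v)"] u(2) unfolding Vbeta_def by simp
    then show ?thesis by simp
  qed
  with u that show ?thesis by simp
qed

lemma Xpi_optimal: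
  assumes mpc: "mpc_feedback f X U l N \<mu>" and x: "x \<in> Xpi f X U l lam lbar C N0" and N: "N0 \<le> N"
  obtains u where "x \<in> X" "u \<in> adm f X U N x"
    "Jbeta f l N x u - (real N + 1) / 2 * ell_star f X U l + (lam x + lbar) \<le> C"
proof -
  have xX: "x \<in> X"
    and V: "Vbeta f X U l N x - ereal ((real N + 1) / 2 * ell_star f X U l) + ereal (lam x + lbar) \<le> ereal C"
    using x N by (auto simp: Xpi_def)
  have "adm f X U N x \<noteq> {}"
  proof
    assume "adm f X U N x = {}"
    then have "Vbeta f X U l N x = \<infinity>" by (simp add: Vbeta_def top_ereal_def)
    then show False using V by simp
  qed
  then obtain u where "u \<in> adm f X U N x" "Vbeta f X U l N x = ereal (Jbeta f l N x u)"
    using mpc_feedback_optimal[OF mpc xX] by metis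
  with V xX that show ?thesis by simp
qed

lemma limsup_average_le:
  fixes a :: "nat \<Rightarrow> real"
  assumes "\<And>T. a T \<le> real T * c + K"
  shows "limsup (\<lambda>T. ereal (a T / real T)) \<le> ereal c"
proof -
  have "eventually (\<lambda>T. ereal (a T / real T) \<le> ereal (c + K / real T)) sequentially"
    using eventually_gt_at_top[of "0::nat"]
  proof eventually_elim
    case (elim T)
    have "a T / real T \<le> (real T * c + K) / real T"
      using assms[of T] elim by (intro divide_right_mono) auto
    also have "\<dots> = c + K / real T" using elim by (simp add: field_simps)
    finally show ?case by simp
  qed
  then have "limsup (\<lambda>T. ereal (a T / real T)) \<le> limsup (\<lambda>T. ereal (c + K / real T))"
    by (rule Limsup_mono)
  also have "\<dots> = ereal c"
  proof (rule lim_imp_Limsup)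
    have "(\<lambda>T. c + K / real T) \<longlonglongrightarrow> c + 0"
      by (intro tendsto_add tendsto_const lim_const_over_n)
    then show "(\<lambda>T. ereal (c + K / real T)) \<longlonglongrightarrow> ereal c" by (intro tendsto_ereal) simp
  qed simp
  finally show ?thesis .
qed

lemma Jav_le_of_dissipation:
  fixes V :: "'a \<Rightarrow> real"
  assumes decrease: "\<And>t. V (cltraj f \<mu> x (Suc t))
      \<le> V (cltraj f \<mu> x t) - l (cltraj f \<mu> x t) (\<mu> (cltraj f \<mu> x t)) + c"
    and lower: "\<And>t. Vmin \<le> V (cltraj f \<mu> x t)" and upper: "\<And>t. V (cltraj f \<mu> x t) \<le> Vmax"
  shows "Jav f l x \<mu> \<le> ereal c"
proof -
  have telescope: "JT f l T x \<mu> \<le> V x - V (cltraj f \<mu> x T) + real T * c" for T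
  proof (induction T)
    case (Suc T)
    then show ?case using decrease[of T] by (simp add: JT_def algebra_simps)
  qed (simp add: JT_def)
  have "JT f l T x \<mu> \<le> real T * c + (Vmax - Vmin)" for T
    using telescope[of T] upper[of 0] lower[of T] by simp
  then show ?thesis unfolding Jav_def by (rule limsup_average_le)
qed

section \<open>Choice of the window length\<close>

text \<open>\<open>Cb / h\<close> pays for the rotated cost before the window and \<open>(2 h + 1) K / N\<close>
  for a bridge of cost \<open>K\<close> after it.\<close>
definition step_loss :: "real \<Rightarrow> real \<Rightarrow> nat \<Rightarrow> nat \<Rightarrow> real" where
  "step_loss Cb K N h = Cb / real h + real (2 * h + 1) * K / real N"

lemma class_L_inverse_sqrt: "0 \<le> A \<Longrightarrow> class_L (\<lambda>t. A / sqrt (t + 1))"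
  unfolding class_L_def
proof (intro conjI allI impI)
  show "continuous_on {0..} (\<lambda>t. A / sqrt (t + 1))"
    by (intro continuous_intros) auto
  show "((\<lambda>t. A / sqrt (t + 1)) \<longlongrightarrow> 0) at_top"
    by real_asymp
qed (auto intro!: divide_left_mono mult_pos_pos)

lemma step_loss_le_inverse_sqrt:
  fixes a Cb K :: real
  assumes a: "0 < a" and Cb: "0 < Cb" and K: "0 \<le> K"
    and N: "2 * sqrt (Cb / a) + 2 \<le> sqrt (real N)"
  defines "h \<equiv> nat \<lceil>sqrt (Cb / a) * sqrt (real N)\<rceil>"
  shows "1 \<le> h" "2 * h < N" "real N * Cb \<le> real h * real h * a"
    "step_loss Cb K N h \<le> (Cb / sqrt (Cb / a) + 2 * sqrt (Cb / a) * K + 3 * K) / sqrt (real N)"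
proof -
  define c where "c = sqrt (Cb / a)"
  define x where "x = sqrt (real N)"
  have c: "0 < c" "c * c = Cb / a" using a Cb by (simp_all add: c_def)
  have x: "2 * c + 2 \<le> x" "x * x = real N" using N by (simp_all add: c_def x_def)
  have cx: "0 < c * x" using c x by simp
  have h: "c * x \<le> real h" "real h < c * x + 1"
    using cx unfolding h_def c_def x_def by linarith+
  show "1 \<le> h" using h cx by linarith
  have "real (2 * h) < 2 * c * x + 2" using h by simp
  also have "\<dots> < (2 * c + 2) * x" using x c by (simp add: algebra_simps)
  also have "\<dots> \<le> x * x" using x c by (intro mult_right_mono) auto
  finally show "2 * h < N" using x by simp
  have "real N * Cb = (c * x) * (c * x) * a" using c x a by (simp add: field_simps)
  also have "\<dots> \<le> real h * real h * a" using h cx a by (intro mult_mono mult_right_mono) auto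
  finally show "real N * Cb \<le> real h * real h * a" .
  have "Cb / real h \<le> Cb / c / x" using h cx Cb by (simp add: frac_le)
  moreover have "real (2 * h + 1) * K / real N \<le> (2 * c * K + 3 * K) / x"
  proof -
    have "real (2 * h + 1) * K \<le> (2 * c * x + 3) * K" using h K by (intro mult_right_mono) auto
    also have "\<dots> \<le> (2 * c * K + 3 * K) * x"
      using mult_left_mono[of 1 x K] x c K by (simp add: algebra_simps)
    finally have "real (2 * h + 1) * K / real N \<le> (2 * c * K + 3 * K) * x / real N"
      by (intro divide_right_mono) auto
    also have "\<dots> = (2 * c * K + 3 * K) / x"
      using x c by (simp flip: x(2))
    finally show ?thesis .
  qed
  ultimately show "step_loss Cb K N h \<le> (Cb / c + 2 * c * K + 3 * K) / sqrt (real N)"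
    unfolding step_loss_def x_def[symmetric] by (simp add: add_divide_distrib)
qed

lemma horizon_choice:
  fixes a Cb K :: real
  assumes a: "0 < a" and Cb: "0 < Cb" and K: "0 \<le> K"
  obtains \<delta> N0 where "class_L \<delta>"
    "\<And>N. N0 \<le> N \<Longrightarrow> \<exists>h. 1 \<le> h \<and> 2 * h < N \<and> real N * Cb \<le> real h * real h * a
        \<and> step_loss Cb K N h \<le> a \<and> step_loss Cb K N h \<le> \<delta> (real N)"
proof
  define c where "c = sqrt (Cb / a)"
  define A where "A = Cb / c + 2 * c * K + 3 * K"
  have A: "0 \<le> A" using a Cb K by (simp add: A_def c_def)
  show "class_L (\<lambda>t. 2 * A / sqrt (t + 1))"
    using A by (intro class_L_inverse_sqrt) simp
  fix N assume "nat \<lceil>(2 * c + 2 + A / a)\<^sup>2\<rceil> \<le> N"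
  then have "(2 * c + 2 + A / a)\<^sup>2 \<le> real N"
    using real_nat_ceiling_ge order_trans of_nat_mono by blast
  then have x: "2 * c + 2 + A / a \<le> sqrt (real N)" by (rule real_le_rsqrt)
  have c: "0 < c" using a Cb by (simp add: c_def)
  moreover have "0 \<le> A / a" using A a by simp
  ultimately have "2 * c + 2 \<le> sqrt (real N)" using x by linarith
  define h where "h = nat \<lceil>c * sqrt (real N)\<rceil>"
  have h: "1 \<le> h" "2 * h < N" "real N * Cb \<le> real h * real h * a"
    "step_loss Cb K N h \<le> A / sqrt (real N)"
    using step_loss_le_inverse_sqrt[OF a Cb K] \<open>2 * c + 2 \<le> sqrt (real N)\<close>
    unfolding h_def A_def c_def by auto
  have N: "1 \<le> real N" using h(2) by simp
  have "A / a \<le> sqrt (real N)" using x c by linarith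
  then have "A \<le> a * sqrt (real N)" using a by (simp add: pos_divide_le_eq mult.commute)
  then have "A / sqrt (real N) \<le> a" using N by (simp add: pos_divide_le_eq mult.commute)
  moreover have "A / sqrt (real N) \<le> 2 * A / sqrt (real N + 1)"
  proof -
    have "sqrt (real N + 1) \<le> sqrt (4 * real N)" using N by simp
    also have "\<dots> = 2 * sqrt (real N)" by (simp add: real_sqrt_mult)
    finally show ?thesis using A N by (simp add: field_simps mult_left_mono)
  qed
  ultimately show "\<exists>h. 1 \<le> h \<and> 2 * h < N \<and> real N * Cb \<le> real h * real h * a
        \<and> step_loss Cb K N h \<le> a \<and> step_loss Cb K N h \<le> 2 * A / sqrt (real N + 1)"
    using h by (intro exI[of _ h]) auto
qed

section \<open>Strict dissipativity with respect to an optimal periodic orbit\<close>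

locale periodic_dissipative_ocp =
  fixes f :: "'a::real_normed_vector \<Rightarrow> 'b::real_normed_vector \<Rightarrow> 'a"
    and X :: "'a set" and U :: "'b set" and l :: "'a \<Rightarrow> 'b \<Rightarrow> real"
    and P :: "nat \<Rightarrow> 'a \<times> 'b" and p :: nat and ls :: real
    and lam :: "'a \<Rightarrow> real" and lbar :: real and \<alpha> :: "real \<Rightarrow> real"
    and \<kappa> :: real and M :: nat and lmax :: real
  assumes orbit: "feasible_orbit f X U P p" and orbit_average: "orbit_avg l P p = ls"
    and lam_bound: "\<And>x. x \<in> X \<Longrightarrow> \<bar>lam x\<bar> \<le> lbar"
    and \<alpha>_class_Kinf: "class_Kinf \<alpha>"
    and dissipation: "\<And>x u. x \<in> X \<Longrightarrow> u \<in> U \<Longrightarrow> f x u \<in> X \<Longrightarrow>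
      \<alpha> (orbit_dist P p (x, u)) \<le> l x u - ls + lam x - lam (f x u)"
    and \<kappa>_pos: "0 < \<kappa>"
    and reach_orbit: "\<And>k x. k < p \<Longrightarrow> x \<in> X \<Longrightarrow> norm (x - fst (P k)) \<le> \<kappa> \<Longrightarrow>
      \<exists>u\<in>adm f X U M x. traj f x u M = fst (P k)"
    and l_le_lmax: "\<And>x u. x \<in> X \<Longrightarrow> u \<in> U \<Longrightarrow> l x u \<le> lmax"
begin

definition rotated_cost :: "'a \<Rightarrow> 'b \<Rightarrow> real" where
  "rotated_cost x u = l x u - ls + lam x - lam (f x u)"

definition near_orbit :: "'a \<Rightarrow> bool" where
  "near_orbit x \<longleftrightarrow> (\<exists>k<p. norm (x - fst (P k)) \<le> \<kappa>)"

definition rotated_max :: real where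
  "rotated_max = max 0 (lmax - ls + 2 * lbar)"

definition bridge_cost :: real where
  "bridge_cost = 2 * lbar + real M * rotated_max"

definition excess :: "nat \<Rightarrow> 'a \<Rightarrow> (nat \<Rightarrow> 'b) \<Rightarrow> real" where
  "excess N x u = Jbeta f l N x u - ls * (real N + 1) / 2 + lam x + lbar"

definition opt_value :: "nat \<Rightarrow> 'a \<Rightarrow> real" where
  "opt_value N x = real_of_ereal (Vbeta f X U l N x)"

lemma period_pos: "0 < p"
  using orbit by (simp add: feasible_orbit_def)

lemma orbit_points:
  assumes "k < p"
  shows "fst (P k) \<in> X" "snd (P k) \<in> U" "f (fst (P k)) (snd (P k)) = fst (P (Suc k mod p))"
  using orbit assms by (auto simp: feasible_orbit_def mem_Times_iff)

lemma lbar_nonneg: "0 \<le> lbar"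
  using lam_bound[OF orbit_points(1)[OF period_pos]] by linarith

lemma rotated_max_nonneg: "0 \<le> rotated_max"
  by (simp add: rotated_max_def)

lemma bridge_cost_nonneg: "0 \<le> bridge_cost"
  using lbar_nonneg rotated_max_nonneg by (simp add: bridge_cost_def)

lemma \<alpha>_mono: "0 \<le> s \<Longrightarrow> s \<le> t \<Longrightarrow> \<alpha> s \<le> \<alpha> t"
  using \<alpha>_class_Kinf unfolding class_Kinf_def by (cases "s = t") (auto intro: less_imp_le)

lemma \<alpha>_\<kappa>_pos: "0 < \<alpha> \<kappa>"
  using \<alpha>_class_Kinf \<kappa>_pos unfolding class_Kinf_def by (metis order.refl)

lemma orbit_dist_ge:
  assumes "\<And>k. k < p \<Longrightarrow> c \<le> norm (x - fst (P k))"
  shows "c \<le> orbit_dist P p (x, u)"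
  unfolding orbit_dist_def
proof (subst Min_ge_iff)
  show "\<forall>d\<in>(\<lambda>k. norm ((x, u) - P k)) ` {..<p}. c \<le> d"
  proof
    fix d assume "d \<in> (\<lambda>k. norm ((x, u) - P k)) ` {..<p}"
    then obtain k where "k < p" "d = norm ((x, u) - P k)" by auto
    moreover have "norm (x - fst (P k)) \<le> norm ((x, u) - P k)"
      using norm_fst_le[of "x - fst (P k)" "u - snd (P k)"] by (cases "P k") simp
    ultimately show "c \<le> d" using assms by force
  qed
qed (use period_pos in auto)

lemma rotated_cost_nonneg: "x \<in> X \<Longrightarrow> u \<in> U \<Longrightarrow> f x u \<in> X \<Longrightarrow> 0 \<le> rotated_cost x u"
  using dissipation[of x u] \<alpha>_mono[OF order_refl orbit_dist_ge[of 0 x u]] \<alpha>_class_Kinf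
  by (simp add: rotated_cost_def class_Kinf_def)

lemma rotated_cost_far:
  "x \<in> X \<Longrightarrow> u \<in> U \<Longrightarrow> f x u \<in> X \<Longrightarrow> \<not> near_orbit x \<Longrightarrow> \<alpha> \<kappa> \<le> rotated_cost x u"
  using dissipation[of x u] \<alpha>_mono[OF less_imp_le[OF \<kappa>_pos] orbit_dist_ge[of \<kappa> x u]]
  by (force simp: rotated_cost_def near_orbit_def)

lemma rotated_cost_le_max:
  "x \<in> X \<Longrightarrow> u \<in> U \<Longrightarrow> f x u \<in> X \<Longrightarrow> rotated_cost x u \<le> rotated_max"
  using l_le_lmax[of x u] lam_bound[of x] lam_bound[of "f x u"]
  unfolding rotated_cost_def rotated_max_def by linarith

lemma rotated_cost_traj_nonneg:
  assumes "u \<in> adm f X U n x" "j < n"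
  shows "0 \<le> rotated_cost (traj f x u j) (u j)"
proof -
  have "traj f x u (Suc j) \<in> X" using admD(1)[OF assms(1), of "Suc j"] assms(2) by simp
  then show ?thesis using admD[OF assms(1)] assms(2) by (intro rotated_cost_nonneg) auto
qed

text \<open>Around the optimal orbit the rotated costs average to zero, and they are nonnegative.\<close>
lemma rotated_cost_orbit:
  assumes "k < p"
  shows "rotated_cost (fst (P k)) (snd (P k)) = 0"
proof -
  define r where "r k = rotated_cost (fst (P k)) (snd (P k))" for k
  have "(\<Sum>k<p. l (fst (P k)) (snd (P k))) = real p * ls"
    using orbit_average period_pos by (simp add: orbit_avg_def field_simps)
  moreover have "(\<Sum>k<p. lam (fst (P (Suc k mod p)))) = (\<Sum>k<p. lam (fst (P k)))"
    using sum_lessThan_rotate[OF period_pos] .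
  ultimately have "(\<Sum>k<p. r k) = 0"
    by (simp add: r_def rotated_cost_def orbit_points sum.distrib sum_subtractf)
  moreover have "\<And>k. k \<in> {..<p} \<Longrightarrow> 0 \<le> r k"
    unfolding r_def using orbit_points period_pos by (auto intro!: rotated_cost_nonneg)
  ultimately show ?thesis
    using assms sum_nonneg_eq_0_iff[of "{..<p}" r] by (simp add: r_def)
qed

lemma traj_orbit:
  assumes "k < p"
  shows "traj f (fst (P k)) (\<lambda>d. snd (P ((k + d) mod p))) d = fst (P ((k + d) mod p))"
proof (induction d)
  case (Suc d)
  then show ?case using orbit_points(3)[of "(k + d) mod p"] period_pos by (simp add: mod_Suc_eq)
qed (use assms in simp)

lemma sum_cost_eq_rotated:
  "(\<Sum>j<n. l (traj f x u j) (u j))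
     = real n * ls + lam (traj f x u n) - lam x + (\<Sum>j<n. rotated_cost (traj f x u j) (u j))"
  using sum_lessThan_telescope[of "\<lambda>j. lam (traj f x u j)" n]
  by (simp add: rotated_cost_def sum.distrib sum_subtractf)

lemma weighted_cost_eq_rotated:
  "weighted_cost f l n x u = ls * (real n * (real n + 1) / 2) + (\<Sum>j<n. lam (traj f x u (Suc j)))
     - real n * lam x + weighted_cost f rotated_cost n x u"
proof -
  define g where "g j = lam (traj f x u j)" for j
  have "weighted_cost f l n x u
      = weighted_sum n (\<lambda>j. (ls + (g (Suc j) - g j)) + rotated_cost (traj f x u j) (u j))"
    unfolding weighted_cost_def by (simp add: g_def rotated_cost_def)
  then show ?thesis
    unfolding weighted_sum_add weighted_sum_const weighted_sum_telescope
    by (simp add: weighted_cost_def g_def)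
qed

lemma weighted_cost_eq_excess:
  "0 < n \<Longrightarrow> weighted_cost f l n x u = real n * (excess n x u + ls * (real n + 1) / 2 - lam x - lbar)"
  by (simp add: excess_def Jbeta_eq_weighted_cost)

lemma excess_eq_rotated:
  assumes "0 < N"
  shows "real N * excess N x u
    = ((\<Sum>j<N. lam (traj f x u (Suc j))) + real N * lbar) + weighted_cost f rotated_cost N x u"
  using weighted_cost_eq_excess[OF assms, of x u] weighted_cost_eq_rotated[of N x u] assms
  by (simp add: algebra_simps)

lemma sum_lam_traj_bound:
  assumes "u \<in> adm f X U n x"
  shows "\<bar>\<Sum>j<n. lam (traj f x u (Suc j))\<bar> \<le> real n * lbar"
proof -
  have "\<bar>lam (traj f x u (Suc j))\<bar> \<le> lbar" if "j < n" for j
    using admD(1)[OF assms, of "Suc j"] that lam_bound by simp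
  then have "\<bar>\<Sum>j<n. lam (traj f x u (Suc j))\<bar> \<le> (\<Sum>j<n. lbar)"
    by (intro order_trans[OF sum_abs] sum_mono) auto
  then show ?thesis by simp
qed

lemma rotated_le_excess:
  assumes "u \<in> adm f X U N x" "0 < N"
  shows "weighted_cost f rotated_cost N x u \<le> real N * excess N x u"
  using excess_eq_rotated[OF assms(2), of x u] sum_lam_traj_bound[OF assms(1)] by linarith

lemma excess_nonneg:
  assumes "u \<in> adm f X U N x" "0 < N"
  shows "0 \<le> excess N x u"
proof -
  have "0 \<le> weighted_cost f rotated_cost N x u"
    unfolding weighted_cost_def using rotated_cost_traj_nonneg[OF assms(1)] by (rule weighted_sum_nonneg)
  then have "0 \<le> real N * excess N x u" using rotated_le_excess[OF assms] by linarith
  then show ?thesis using assms(2) by (simp add: zero_le_mult_iff)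
qed

text \<open>Reach the orbit in \<open>M\<close> steps, then follow it: only the first \<open>M\<close> rotated
  costs can be nonzero.\<close>
lemma bridge_to_orbit:
  assumes z: "z \<in> X" and near: "near_orbit z"
  obtains w where "\<And>n. w \<in> adm f X U n z" "\<And>n. 0 < n \<Longrightarrow> excess n z w \<le> bridge_cost"
proof -
  obtain k where k: "k < p" "norm (z - fst (P k)) \<le> \<kappa>"
    using near by (auto simp: near_orbit_def)
  obtain ub where ub: "ub \<in> adm f X U M z" "traj f z ub M = fst (P k)"
    using reach_orbit[OF k(1) z k(2)] by blast
  define ob where "ob = (\<lambda>d. snd (P ((k + d) mod p)))"
  define w where "w = ctrl_append M ub ob"
  have mod_p: "(k + d) mod p < p" for d using period_pos by simp
  have "ob \<in> adm f X U n (fst (P k))" for n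
    using traj_orbit[OF k(1)] orbit_points mod_p by (simp add: adm_def ob_def)
  then have w_adm: "w \<in> adm f X U n z" for n
    using adm_ctrl_append[OF ub(1), of ob n] ub(2) adm_mono[of w f X U "M + n" z n]
    by (simp add: w_def)
  have traj_w: "traj f z w (M + d) = fst (P ((k + d) mod p))" for d
    using traj_ctrl_append_ge[of f z M ub ob d] traj_orbit[OF k(1)] ub(2) by (simp add: w_def ob_def)
  have "rotated_cost (traj f z w j) (w j) \<le> (if j < M then rotated_max else 0)" for j
  proof (cases "j < M")
    case True
    have "traj f z w (Suc j) \<in> X" using admD(1)[OF w_adm] by blast
    then show ?thesis using True admD[OF w_adm, of j "Suc j"] by (simp add: rotated_cost_le_max)
  next
    case False
    then obtain d where "j = M + d" using le_Suc_ex not_less by blast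
    then show ?thesis using traj_w rotated_cost_orbit[OF mod_p] by (simp add: w_def ctrl_append_def ob_def)
  qed
  then have rot: "weighted_cost f rotated_cost n z w \<le> real n * real M * rotated_max" for n
    unfolding weighted_cost_def using rotated_max_nonneg by (rule weighted_sum_le_initial)
  have "excess n z w \<le> bridge_cost" if "0 < n" for n
  proof -
    have "real n * excess n z w \<le> real n * bridge_cost"
      using excess_eq_rotated[OF that, of z w] sum_lam_traj_bound[OF w_adm, of n] rot[of n]
      by (simp add: bridge_cost_def algebra_simps)
    then show ?thesis using that by simp
  qed
  with w_adm that show ?thesis by blast
qed

lemma excess_near_orbit:
  assumes "x \<in> X" "near_orbit x" "0 < N"
  obtains w where "w \<in> adm f X U N x" "excess N x w \<le> bridge_cost"
  using bridge_to_orbit[OF assms(1,2)] assms(3) by metis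

text \<open>A small rotated cost leaves no room to stay away from the orbit during the
  window where the weights exceed \<open>h\<close>.\<close>
lemma near_orbit_in_window:
  assumes u: "u \<in> adm f X U N x" and h: "2 * h \<le> N"
    and small: "weighted_cost f rotated_cost N x u < real h * real (Suc h) * \<alpha> \<kappa>"
  obtains k where "N - 2 * h \<le> k" "k < N - h" "near_orbit (traj f x u k)"
proof -
  have "\<exists>k. N - 2 * h \<le> k \<and> k < N - h \<and> near_orbit (traj f x u k)"
  proof (rule ccontr)
    assume far: "\<not> ?thesis"
    have "\<alpha> \<kappa> \<le> rotated_cost (traj f x u k) (u k)" if "N - 2 * h \<le> k" "k < N - h" for k
    proof -
      have "traj f x u (Suc k) \<in> X" using admD(1)[OF u, of "Suc k"] that by simp
      then show ?thesis using far that admD[OF u, of k] by (intro rotated_cost_far) auto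
    qed
    then have "real h * real (Suc h) * \<alpha> \<kappa> \<le> weighted_cost f rotated_cost N x u"
      unfolding weighted_cost_def using h rotated_cost_traj_nonneg[OF u] \<alpha>_\<kappa>_pos
      by (intro weighted_sum_ge_window) auto
    with small show False by simp
  qed
  then show ?thesis using that by blast
qed

lemma tail_replacement_le:
  assumes w: "excess (Suc m) z w \<le> bridge_cost" and v: "v \<in> adm f X U m z" and m: "0 < m"
  shows "weighted_cost f l (Suc m) z w - weighted_cost f l m z v
    \<le> real (Suc m) * (ls + bridge_cost) - lam z - lbar"
proof -
  have "weighted_cost f l (Suc m) z w
      \<le> real (Suc m) * (bridge_cost + ls * (real (Suc m) + 1) / 2 - lam z - lbar)"
    using weighted_cost_eq_excess[of "Suc m" z w] w by (simp add: mult_left_mono)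
  moreover have "real m * (ls * (real m + 1) / 2 - lam z - lbar) \<le> weighted_cost f l m z v"
    using weighted_cost_eq_excess[OF m, of z v] excess_nonneg[OF v m] by (simp add: mult_left_mono)
  moreover have "real (Suc m) * (bridge_cost + ls * (real (Suc m) + 1) / 2 - lam z - lbar)
      - real m * (ls * (real m + 1) / 2 - lam z - lbar)
      = real (Suc m) * (ls + bridge_cost) - lam z - lbar"
    by (simp add: field_simps)
  ultimately show ?thesis by linarith
qed

text \<open>The candidate follows \<open>u\<close> up to time \<open>k\<close>, where its trajectory is near the
  orbit, and then bridges to the orbit.\<close>
lemma shifted_candidate:
  assumes u: "u \<in> adm f X U N x" and k: "0 < k" "k < N" and near: "near_orbit (traj f x u k)"
  obtains v where "v \<in> adm f X U N (f x (u 0))"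
    "weighted_cost f l N (f x (u 0)) v \<le> weighted_cost f l N x u - real N * (l x (u 0) - ls)
       + weighted_cost f rotated_cost N x u / real (N - k) + real (Suc (N - k)) * bridge_cost"
proof -
  obtain n where N: "N = Suc n" using k by (cases N) auto
  obtain q where kq: "k = Suc q" using k by (cases k) auto
  define x1 where "x1 = f x (u 0)"
  define u1 where "u1 = (\<lambda>j. u (Suc j))"
  define z where "z = traj f x u k"
  have traj_u1: "traj f x1 u1 j = traj f x u (Suc j)" for j
    using traj_shift[of f x u 1 j] by (simp add: x1_def u1_def)
  have u1_adm: "u1 \<in> adm f X U n x1"
    using adm_shift[OF u, of 1] N by (simp add: x1_def u1_def)
  have q: "q \<le> n" "n - q = N - k" "0 < N - k" using k N kq by auto
  have z: "z \<in> X" "traj f x1 u1 q = z" "x1 \<in> X"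
    using admD(1)[OF u, of k] admD(1)[OF u, of 1] k traj_u1 kq by (auto simp: z_def x1_def)
  obtain w where w_adm: "\<And>m. w \<in> adm f X U m z"
    and w_exc: "\<And>m. 0 < m \<Longrightarrow> excess m z w \<le> bridge_cost"
    using bridge_to_orbit[OF z(1)] near z_def by metis
  define v where "v = ctrl_append q u1 w"
  have "v \<in> adm f X U (q + (N - q)) x1"
    unfolding v_def by (rule adm_ctrl_append[OF adm_mono[OF u1_adm q(1)]]) (use w_adm z in simp)
  then have v_adm: "v \<in> adm f X U N x1" using q N by simp
  have split: "weighted_cost f l N x u = real N * l x (u 0) + weighted_cost f l n x1 u1"
    using weighted_cost_Suc[of f l n x u] N by (simp add: x1_def u1_def)
  have diff: "weighted_cost f l N x1 v - weighted_cost f l n x1 u1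
     = (\<Sum>j<q. l (traj f x1 u1 j) (u1 j)) + weighted_cost f l (Suc (N - k)) z w
       - weighted_cost f l (N - k) z (\<lambda>d. u1 (q + d))"
    using weighted_cost_ctrl_append_Suc_diff[OF q(1), of f l x1 u1 w] z(2) q N
    by (simp add: v_def Suc_diff_le)
  have tail: "weighted_cost f l (Suc (N - k)) z w - weighted_cost f l (N - k) z (\<lambda>d. u1 (q + d))
      \<le> real (Suc (N - k)) * (ls + bridge_cost) - lam z - lbar"
  proof -
    have "(\<lambda>d. u1 (q + d)) \<in> adm f X U (N - k) z" using adm_shift[OF u1_adm q(1)] q z(2) by simp
    then show ?thesis using tail_replacement_le[OF w_exc[OF zero_less_Suc]] q(3) by blast
  qed
  have prefix: "(\<Sum>j<q. l (traj f x1 u1 j) (u1 j))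
      \<le> real q * ls + lam z - lam x1 + (\<Sum>j<k. rotated_cost (traj f x u j) (u j))"
  proof -
    have "(\<Sum>j<k. l (traj f x u j) (u j)) = l x (u 0) + (\<Sum>j<q. l (traj f x1 u1 j) (u1 j))"
      unfolding kq sum.lessThan_Suc_shift traj_u1 by (simp add: u1_def)
    moreover have "(\<Sum>j<k. l (traj f x u j) (u j))
        = real k * ls + lam z - lam x + (\<Sum>j<k. rotated_cost (traj f x u j) (u j))"
      unfolding z_def by (rule sum_cost_eq_rotated)
    moreover have "l x (u 0) = ls + lam x1 - lam x + rotated_cost x (u 0)"
      by (simp add: rotated_cost_def x1_def)
    moreover have "0 \<le> rotated_cost x (u 0)" using rotated_cost_traj_nonneg[OF u, of 0] k by simp
    moreover have "real k * ls = real q * ls + ls" by (simp add: kq algebra_simps)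
    ultimately show ?thesis by linarith
  qed
  have "real (N - k) * (\<Sum>j<k. rotated_cost (traj f x u j) (u j)) \<le> weighted_cost f rotated_cost N x u"
    unfolding weighted_cost_def using k rotated_cost_traj_nonneg[OF u]
    by (intro weighted_sum_ge_prefix) auto
  then have rotated: "(\<Sum>j<k. rotated_cost (traj f x u j) (u j))
      \<le> weighted_cost f rotated_cost N x u / real (N - k)"
    using q(3) by (simp add: pos_le_divide_eq mult.commute)
  have "real N = real q + real (Suc (N - k))" using k kq by simp
  then have "real N * (l x (u 0) - ls) = real N * l x (u 0) - real q * ls - real (Suc (N - k)) * ls"
    by (simp add: algebra_simps)
  moreover have "real (Suc (N - k)) * (ls + bridge_cost)
      = real (Suc (N - k)) * ls + real (Suc (N - k)) * bridge_cost"
    by (simp add: distrib_left)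
  moreover have "- lam x1 - lbar \<le> 0" using lam_bound[OF z(3)] by simp
  ultimately have "weighted_cost f l N x1 v \<le> weighted_cost f l N x u - real N * (l x (u 0) - ls)
       + weighted_cost f rotated_cost N x u / real (N - k) + real (Suc (N - k)) * bridge_cost"
    using split diff tail prefix rotated by linarith
  then show ?thesis using that v_adm by (simp add: x1_def)
qed

lemma opt_value_bounds:
  assumes mpc: "mpc_feedback f X U l N \<mu>" and N: "0 < N"
    and y: "y \<in> X" "v \<in> adm f X U N y" "excess N y v \<le> Cb"
  shows "ls * (real N + 1) / 2 - 2 * lbar \<le> opt_value N y" "opt_value N y \<le> ls * (real N + 1) / 2 + Cb"
proof -
  obtain u where u: "u \<in> adm f X U N y" "Vbeta f X U l N y = ereal (Jbeta f l N y u)"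
    and opt: "\<And>v. v \<in> adm f X U N y \<Longrightarrow> Jbeta f l N y u \<le> Jbeta f l N y v"
    using mpc_feedback_optimal[OF mpc y(1)] y(2) by blast
  have "0 \<le> excess N y u" "excess N y u \<le> Cb"
    using excess_nonneg[OF u(1) N] opt[OF y(2)] y(3) by (auto simp: excess_def)
  then show "ls * (real N + 1) / 2 - 2 * lbar \<le> opt_value N y" "opt_value N y \<le> ls * (real N + 1) / 2 + Cb"
    using u(2) lam_bound[OF y(1)] by (auto simp: opt_value_def excess_def)
qed

context
  fixes N h :: nat and Cb :: real
  assumes h_pos: "1 \<le> h" and horizon: "2 * h < N"
    and window: "real N * Cb \<le> real h * real h * \<alpha> \<kappa>"
    and Cb_ge: "bridge_cost + \<alpha> \<kappa> \<le> Cb"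
    and loss_le: "step_loss Cb bridge_cost N h \<le> \<alpha> \<kappa>"
begin

lemma successor_candidate:
  assumes u: "u \<in> adm f X U N y" and exc: "excess N y u \<le> Cb"
  obtains v where "v \<in> adm f X U N (f y (u 0))"
    "Jbeta f l N (f y (u 0)) v \<le> Jbeta f l N y u - l y (u 0) + ls + step_loss Cb bridge_cost N h"
proof -
  have N: "0 < N" using horizon by simp
  have Cb: "0 \<le> Cb" using Cb_ge bridge_cost_nonneg \<alpha>_\<kappa>_pos by linarith
  have R: "weighted_cost f rotated_cost N y u \<le> real N * Cb"
    using rotated_le_excess[OF u N] mult_left_mono[OF exc, of "real N"] by linarith
  also have "\<dots> < real h * real (Suc h) * \<alpha> \<kappa>"
  proof -
    have "0 < real h * \<alpha> \<kappa>" using h_pos \<alpha>_\<kappa>_pos by simp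
    then show ?thesis using window by (simp add: algebra_simps)
  qed
  finally have small: "weighted_cost f rotated_cost N y u < real h * real (Suc h) * \<alpha> \<kappa>" .
  obtain k where k: "N - 2 * h \<le> k" "k < N - h" "near_orbit (traj f y u k)"
  proof (rule near_orbit_in_window[OF u _ small])
    show "2 * h \<le> N" using horizon by simp
  qed
  have kN: "0 < k" "k < N" "h < N - k" "N - k \<le> 2 * h" using k horizon by auto
  obtain v where v: "v \<in> adm f X U N (f y (u 0))"
    "weighted_cost f l N (f y (u 0)) v \<le> weighted_cost f l N y u - real N * (l y (u 0) - ls)
       + weighted_cost f rotated_cost N y u / real (N - k) + real (Suc (N - k)) * bridge_cost"
    using shifted_candidate[OF u kN(1,2) k(3)] by blast
  have "weighted_cost f rotated_cost N y u / real (N - k) \<le> real N * Cb / real h"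
    using R kN h_pos Cb by (intro frac_le) auto
  moreover have "real (Suc (N - k)) * bridge_cost \<le> real (2 * h + 1) * bridge_cost"
    using kN bridge_cost_nonneg by (intro mult_right_mono) auto
  moreover have "real N * step_loss Cb bridge_cost N h
      = real N * Cb / real h + real (2 * h + 1) * bridge_cost"
    using N by (simp add: step_loss_def field_simps)
  moreover have "weighted_cost f l N y u = real N * Jbeta f l N y u"
    using N by (simp add: Jbeta_eq_weighted_cost)
  ultimately have "weighted_cost f l N (f y (u 0)) v
      \<le> real N * (Jbeta f l N y u - l y (u 0) + ls + step_loss Cb bridge_cost N h)"
    using v(2) by (simp add: algebra_simps)
  then show ?thesis
    using v(1) N that by (simp add: Jbeta_eq_weighted_cost pos_divide_le_eq mult.commute)
qed

text \<open>Near the orbit the excess is reset below \<open>bridge_cost + \<alpha> \<kappa>\<close>; away from it the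
  rotated stage cost \<open>\<alpha> \<kappa>\<close> pays for the loss.\<close>
lemma excess_successor_le:
  assumes y: "y \<in> X" and u: "u \<in> adm f X U N y"
    and opt: "\<And>v. v \<in> adm f X U N y \<Longrightarrow> Jbeta f l N y u \<le> Jbeta f l N y v"
    and exc: "excess N y u \<le> Cb"
    and J: "Jbeta f l N (f y (u 0)) v \<le> Jbeta f l N y u - l y (u 0) + ls + step_loss Cb bridge_cost N h"
  shows "excess N (f y (u 0)) v \<le> Cb"
proof -
  have N: "0 < N" using horizon by simp
  have decrease: "excess N (f y (u 0)) v \<le> excess N y u - rotated_cost y (u 0) + step_loss Cb bridge_cost N h"
    using J by (simp add: excess_def rotated_cost_def)
  show ?thesis
  proof (cases "near_orbit y")
    case True
    obtain w where w: "w \<in> adm f X U N y" "excess N y w \<le> bridge_cost"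
      using excess_near_orbit[OF y True N] by blast
    have "excess N y u \<le> excess N y w" using opt[OF w(1)] by (simp add: excess_def)
    then show ?thesis using decrease w(2) rotated_cost_traj_nonneg[OF u N] loss_le Cb_ge by simp
  next
    case False
    have "f y (u 0) \<in> X" using admD(1)[OF u, of 1] N by simp
    then have "\<alpha> \<kappa> \<le> rotated_cost y (u 0)"
      using rotated_cost_far[OF y _ _ False] admD(2)[OF u N] by simp
    then show ?thesis using decrease exc loss_le by simp
  qed
qed

lemma opt_value_step:
  assumes mpc: "mpc_feedback f X U l N \<mu>" and y: "y \<in> X"
    and v: "v \<in> adm f X U N y" "excess N y v \<le> Cb"
  obtains w where "f y (\<mu> y) \<in> X" "w \<in> adm f X U N (f y (\<mu> y))" "excess N (f y (\<mu> y)) w \<le> Cb"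
    "opt_value N (f y (\<mu> y)) \<le> opt_value N y - l y (\<mu> y) + (ls + step_loss Cb bridge_cost N h)"
proof -
  have N: "0 < N" using horizon by simp
  obtain u where u: "u \<in> adm f X U N y" "\<mu> y = u 0" "opt_value N y = Jbeta f l N y u"
    and opt: "\<And>v. v \<in> adm f X U N y \<Longrightarrow> Jbeta f l N y u \<le> Jbeta f l N y v"
    using mpc_feedback_optimal[OF mpc y] v(1) unfolding opt_value_def by (metis empty_iff real_of_ereal.simps(1))
  have exc: "excess N y u \<le> Cb" using opt[OF v(1)] v(2) by (simp add: excess_def)
  obtain w where w: "w \<in> adm f X U N (f y (u 0))"
    "Jbeta f l N (f y (u 0)) w \<le> Jbeta f l N y u - l y (u 0) + ls + step_loss Cb bridge_cost N h"
    using successor_candidate[OF u(1) exc] by blast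
  have y1: "f y (u 0) \<in> X" using admD(1)[OF u(1), of 1] N by simp
  obtain u1 where "opt_value N (f y (u 0)) = Jbeta f l N (f y (u 0)) u1"
    "Jbeta f l N (f y (u 0)) u1 \<le> Jbeta f l N (f y (u 0)) w"
    using mpc_feedback_optimal[OF mpc y1] w(1) unfolding opt_value_def by (metis empty_iff real_of_ereal.simps(1))
  then show ?thesis
    using that y1 w excess_successor_le[OF y u(1) opt exc w(2)] u(2,3) by simp
qed

text \<open>The optimal value is a storage function for the closed loop with supply rate
  \<open>l - ls - step_loss\<close>.\<close>
lemma mpc_average_cost_le:
  assumes mpc: "mpc_feedback f X U l N \<mu>"
    and x: "x \<in> X" "v \<in> adm f X U N x" "excess N x v \<le> Cb"
  shows "Jav f l x \<mu> \<le> ereal (ls + step_loss Cb bridge_cost N h)"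
proof -
  define good where "good y \<longleftrightarrow> y \<in> X \<and> (\<exists>v\<in>adm f X U N y. excess N y v \<le> Cb)" for y
  have N: "0 < N" using horizon by simp
  have step: "good (f y (\<mu> y))
      \<and> opt_value N (f y (\<mu> y)) \<le> opt_value N y - l y (\<mu> y) + (ls + step_loss Cb bridge_cost N h)"
    if "good y" for y
    using that opt_value_step[OF mpc] unfolding good_def by metis
  have good: "good (cltraj f \<mu> x t)" for t
  proof (induction t)
    case 0
    show ?case using x by (auto simp: good_def)
  next
    case (Suc t)
    then show ?case using step by simp
  qed
  have "ls * (real N + 1) / 2 - 2 * lbar \<le> opt_value N (cltraj f \<mu> x t)"
    "opt_value N (cltraj f \<mu> x t) \<le> ls * (real N + 1) / 2 + Cb" for t
    using good[of t] opt_value_bounds[OF mpc N] unfolding good_def by blast+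
  then show ?thesis
    using step good by (intro Jav_le_of_dissipation[of "opt_value N"]) auto
qed

end

lemma average_performance:
  obtains \<delta> N0 where "class_L \<delta>"
    "\<And>N \<mu> x u. N0 \<le> N \<Longrightarrow> mpc_feedback f X U l N \<mu> \<Longrightarrow> x \<in> X \<Longrightarrow>
      u \<in> adm f X U N x \<Longrightarrow> excess N x u \<le> C \<Longrightarrow> Jav f l x \<mu> \<le> ereal (ls + \<delta> (real N))"
proof -
  define Cb where "Cb = max C (bridge_cost + \<alpha> \<kappa>)"
  have Cb: "0 < Cb" "bridge_cost + \<alpha> \<kappa> \<le> Cb" "C \<le> Cb"
    using bridge_cost_nonneg \<alpha>_\<kappa>_pos by (auto simp: Cb_def)
  obtain \<delta> N0 where \<delta>: "class_L \<delta>" and horizon: "\<And>N. N0 \<le> N \<Longrightarrow> \<exists>h. 1 \<le> h \<and> 2 * h < N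
      \<and> real N * Cb \<le> real h * real h * \<alpha> \<kappa> \<and> step_loss Cb bridge_cost N h \<le> \<alpha> \<kappa>
      \<and> step_loss Cb bridge_cost N h \<le> \<delta> (real N)"
    using horizon_choice[OF \<alpha>_\<kappa>_pos Cb(1) bridge_cost_nonneg] by blast
  have "Jav f l x \<mu> \<le> ereal (ls + \<delta> (real N))"
    if N: "N0 \<le> N" and mpc: "mpc_feedback f X U l N \<mu>"
      and x: "x \<in> X" "u \<in> adm f X U N x" "excess N x u \<le> C" for N \<mu> x u
  proof -
    obtain h where h: "1 \<le> h" "2 * h < N" "real N * Cb \<le> real h * real h * \<alpha> \<kappa>"
      "step_loss Cb bridge_cost N h \<le> \<alpha> \<kappa>" "step_loss Cb bridge_cost N h \<le> \<delta> (real N)"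
      using horizon[OF N] by blast
    have "Jav f l x \<mu> \<le> ereal (ls + step_loss Cb bridge_cost N h)"
      using x Cb(3) by (intro mpc_average_cost_le[OF h(1-3) Cb(2) h(4) mpc]) auto
    then show ?thesis using h(5) order_trans by fastforce
  qed
  with \<delta> that show ?thesis by blast
qed

end

lemma bounded_above_on_compact_Times:
  assumes "continuous_on (X \<times> U) (\<lambda>(x, u). g x u)" "compact X" "compact U"
  obtains B :: real where "\<And>x u. x \<in> X \<Longrightarrow> u \<in> U \<Longrightarrow> g x u \<le> B"
proof -
  have "bounded ((\<lambda>(x, u). g x u) ` (X \<times> U))"
    using assms by (intro compact_imp_bounded compact_continuous_image compact_Times)
  then obtain B where B: "\<forall>y\<in>(\<lambda>(x, u). g x u) ` (X \<times> U). \<bar>y\<bar> \<le> B"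
    by (auto simp: bounded_real)
  have "g x u \<le> B" if "x \<in> X" "u \<in> U" for x u
  proof -
    have "g x u \<in> (\<lambda>(x, u). g x u) ` (X \<times> U)" using that by force
    then show ?thesis using B abs_le_D1 by blast
  qed
  then show ?thesis using that by blast
qed

theorem theorem10:
  fixes f :: "'a::euclidean_space \<Rightarrow> 'b::euclidean_space \<Rightarrow> 'a"
    and X :: "'a set" and U :: "'b set" and l :: "'a \<Rightarrow> 'b \<Rightarrow> real"
    and Pstar :: "nat \<Rightarrow> 'a \<times> 'b" and ps :: nat
    and lam :: "'a \<Rightarrow> real" and lbar :: real and \<alpha> :: "real \<Rightarrow> real"
    and \<kappa> :: real and M' :: nat and \<rho> :: "real \<Rightarrow> real" and C :: real
  assumes A1: "continuous_on (X \<times> U) (\<lambda>(x, u). f x u)"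
              "continuous_on (X \<times> U) (\<lambda>(x, u). l x u)"
              "compact X" "compact U"
    and opt_orbit: "feasible_orbit f X U Pstar ps"
              "orbit_avg l Pstar ps = ell_star f X U l"
    and A3: "\<forall>x\<in>X. \<bar>lam x\<bar> \<le> lbar" "class_Kinf \<alpha>"
            "\<forall>x\<in>X. \<forall>u\<in>U. f x u \<in> X \<longrightarrow>
               l x u - ell_star f X U l + lam x - lam (f x u) \<ge> \<alpha> (orbit_dist Pstar ps (x, u))"
    and A4: "\<kappa> > 0" "class_Kinf \<rho>"
            "\<forall>k<ps. \<forall>x\<in>X. \<forall>y\<in>X. norm (x - fst (Pstar k)) \<le> \<kappa> \<and> norm (y - fst (Pstar k)) \<le> \<kappa> \<longrightarrow>
               (\<exists>u\<in>adm f X U M' x. traj f x u M' = y \<and>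
                  (\<forall>j<M'. orbit_dist Pstar ps (traj f x u j, u j)
                        \<le> \<rho> (max (orbitX_dist Pstar ps x) (orbitX_dist Pstar ps y))))"
    and C_gt: "C > real M' * (ell_max X U l - ell_star f X U l) + 2 * lbar
                   + ell_star f X U l * real ps"
  shows "\<exists>\<delta> N0. class_L \<delta> \<and> (\<forall>N\<ge>N0. \<forall>\<mu>. mpc_feedback f X U l N \<mu> \<longrightarrow>
           (\<forall>x\<in>Xpi f X U l lam lbar C N0.
              Jav f l x \<mu> \<le> ereal (ell_star f X U l + \<delta> (real N))))"
proof -
  obtain lmax where lmax: "\<And>x u. x \<in> X \<Longrightarrow> u \<in> U \<Longrightarrow> l x u \<le> lmax"
    using bounded_above_on_compact_Times[OF A1(2-4)] by blast
  interpret periodic_dissipative_ocp f X U l Pstar ps "ell_star f X U l" lam lbar \<alpha> \<kappa> M' lmax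
  proof
    fix k x assume k: "k < ps" and x: "x \<in> X" "norm (x - fst (Pstar k)) \<le> \<kappa>"
    have "fst (Pstar k) \<in> X"
      using opt_orbit(1) k by (auto simp: feasible_orbit_def mem_Times_iff)
    then show "\<exists>u\<in>adm f X U M' x. traj f x u M' = fst (Pstar k)"
      using A4(3)[rule_format, OF k x(1) _ conjI[OF x(2)]] A4(1) by fastforce
  next
    show "\<And>x u. x \<in> X \<Longrightarrow> u \<in> U \<Longrightarrow> f x u \<in> X \<Longrightarrow>
      \<alpha> (orbit_dist Pstar ps (x, u)) \<le> l x u - ell_star f X U l + lam x - lam (f x u)"
      using A3(3) by blast
  qed (use opt_orbit A3(1,2) A4(1) lmax in simp_all)
  obtain \<delta> N0 where \<delta>: "class_L \<delta>" and performance: "\<And>N \<mu> x u. N0 \<le> N \<Longrightarrow>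
      mpc_feedback f X U l N \<mu> \<Longrightarrow> x \<in> X \<Longrightarrow> u \<in> adm f X U N x \<Longrightarrow> excess N x u \<le> C \<Longrightarrow>
      Jav f l x \<mu> \<le> ereal (ell_star f X U l + \<delta> (real N))"
    using average_performance[where C = C] by blast
  show ?thesis
  proof (intro exI[of _ \<delta>] exI[of _ N0] conjI allI impI ballI)
    show "class_L \<delta>" by (rule \<delta>)
    fix N \<mu> x
    assume N: "N0 \<le> N" and mpc: "mpc_feedback f X U l N \<mu>" and x: "x \<in> Xpi f X U l lam lbar C N0"
    obtain u where "x \<in> X" "u \<in> adm f X U N x"
      and "Jbeta f l N x u - (real N + 1) / 2 * ell_star f X U l + (lam x + lbar) \<le> C"
      by (rule Xpi_optimal[OF mpc x N])
    then show "Jav f l x \<mu> \<le> ereal (ell_star f X U l + \<delta> (real N))"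
      by (intro performance[OF N mpc]) (simp_all add: excess_def mult.commute add.assoc)
  qed
qed

end
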